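(* Let $q=4$, $e=6$, and $n=65921=1+2q^3+q^4+q^8$. Then $$g_{n,q}\equiv S_3^2+S_4^{q^2+1}\pmod{x^{q^e}-x},$$ and $g_{n,q}$ is a permutation polynomial of $\mathbb{F}_{q^e}=\mathbb{F}_{4^6}$.
   Context: For a prime power $q$ with characteristic $p$ and integer $n\ge0$, $g_{n,q}\in\mathbb{F}_p[x]$ is the unique polynomial satisfying $\sum_{a\in\mathbb{F}_q}(x+a)^n=g_{n,q}(x^q-x)$. For a positive integer $m$, $S_m=x+x^q+\cdots+x^{q^{m-1}}\in\mathbb{F}_p[x]$; exponents on $S_m$ denote powers of polynomials. A polynomial $f$ is a permutation polynomial of $\mathbb{F}_Q$ if $c\mapsto f(c)$ is a bijection of $\mathbb{F}_Q$. *)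

theory Defs
  imports "HOL-Computational_Algebra.Polynomial"
begin

definition Fq :: "nat \<Rightarrow> 'a::field set" where
  "Fq q = {c. c ^ q = c}"

text \<open>g_{n,q}: the unique polynomial g with sum over a in F_q of (x+a)^n = g(x^q - x).
  Polynomials are taken over the ambient field 'a (which contains F_p).\<close>
definition gpoly :: "nat \<Rightarrow> nat \<Rightarrow> 'a::field poly" where
  "gpoly n q = (THE g. (\<Sum>a\<in>Fq q. [:a, 1:] ^ n) = pcompose g (monom 1 q - [:0, 1:]))"

definition Spoly :: "nat \<Rightarrow> nat \<Rightarrow> 'a::field poly" where
  "Spoly q m = (\<Sum>i<m. monom 1 (q ^ i))"

end

theory Submission
  imports Defs "HOL-Computational_Algebra.Primes"
begin

text \<open>
  A field with \<open>4\<^sup>6\<close> elements has characteristic 2 and, as \<open>3\<close> divides \<open>4\<^sup>6 - 1\<close>,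
  contains \<open>\<FF>\<^sub>4 = {0, 1, w, w + 1}\<close> with \<open>w\<^sup>2 + w + 1 = 0\<close>. For \<open>a \<in> \<FF>\<^sub>4\<close> the Frobenius turns \<open>(x + a)\<^sup>n\<close>, with
  \<open>n = 1 + 2\<cdot>4\<^sup>3 + 4\<^sup>4 + 4\<^sup>8\<close>, into \<open>(x + a)(x\<^sup>1\<^sup>2\<^sup>8 + a\<^sup>2)(x\<^sup>2\<^sup>5\<^sup>6 + a)(x\<^sup>6\<^sup>5\<^sup>5\<^sup>3\<^sup>6 + a)\<close>, and summing
  over \<open>\<FF>\<^sub>4\<close> keeps only the coefficient of \<open>a\<^sup>3\<close>, because \<open>\<Sum>a\<^sup>k\<close> vanishes unless
  \<open>3\<close> divides \<open>k > 0\<close>. Since \<open>S\<^sub>m(x\<^sup>4 - x) = x\<^bsup>4\<^sup>m\<^esup> - x\<close>, this identifies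
  \<open>g\<^sub>n\<^sub>,\<^sub>4 = S\<^sub>3\<^sup>2 + S\<^sub>4 S\<^sub>8\<close> exactly, and \<open>S\<^sub>8 - S\<^sub>4\<^sup>1\<^sup>6 = M + M\<^sup>4\<close> with \<open>M = x\<^bsup>4\<^sup>6\<^esup> - x\<close>.

  For the permutation property put \<open>B = S\<^sub>3(c)\<close>, \<open>A = S\<^sub>4(c)\<close> and \<open>G = B\<^sup>2 + A\<^sup>1\<^sup>7\<close>.
  The Frobenius \<open>c \<mapsto> c\<^sup>4\<close> permutes the conjugates \<open>c\<^bsup>4\<^sup>i\<^esup>\<close> cyclically, and a short
  computation with them gives \<open>G\<^sup>1\<^sup>6 + G\<^sup>2\<^sup>5\<^sup>6 = A\<^sup>8\<close>. Hence \<open>G\<close> determines \<open>A\<close>, then \<open>B\<close>,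
  then \<open>c\<^sup>6\<^sup>4 = A - B\<close>, and finally \<open>c\<close>, all Frobenius powers being injective.
\<close>

section \<open>Characteristic 2\<close>

lemma numeral_Bit0_CHAR_2:
  assumes "CHAR('a::ring_1) = 2"
  shows "(numeral (num.Bit0 n) :: 'a) = 0"
  using assms of_nat_CHAR[where 'a='a]
  by (metis mult_zero_left numeral_Bit0_eq_double of_nat_numeral)

lemma numeral_Bit1_CHAR_2:
  assumes "CHAR('a::ring_1) = 2"
  shows "(numeral (num.Bit1 n) :: 'a) = 1"
proof -
  have "(numeral (num.Bit1 n) :: 'a) = numeral (num.Bit0 n) + 1"
    by (simp only: numeral_Bit0 numeral_Bit1)
  then show ?thesis by (simp add: numeral_Bit0_CHAR_2[OF assms])
qed

text \<open>Together with \<open>algebra_simps\<close> these reduce the integer coefficients produced by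
  ring normalisation modulo 2, so that \<open>simp\<close> proves identities of characteristic 2.\<close>
lemmas CHAR_2_simps = numeral_Bit0_CHAR_2 numeral_Bit1_CHAR_2 uminus_CHAR_2

lemma power_diff_CHAR:
  fixes x y :: "'a::comm_ring_1"
  assumes "prime CHAR('a)" "m = CHAR('a) ^ n"
  shows "(x - y) ^ m = x ^ m - y ^ m"
  using freshmans_dream'[OF assms, of "x - y" y] by simp

lemma power_CHAR_power_inj:
  fixes x y :: "'a::field"
  assumes "prime CHAR('a)" "m = CHAR('a) ^ n" "x ^ m = y ^ m"
  shows "x = y"
  using power_diff_CHAR[OF assms(1,2), of x y] assms(3) by simp

lemma add_power_CHAR_2:
  fixes x y :: "'a::comm_ring_1"
  assumes "CHAR('a) = 2"
  shows "(x + y) ^ (2 ^ k) = x ^ (2 ^ k) + y ^ (2 ^ k)"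
  by (rule freshmans_dream') (simp_all add: assms)

section \<open>Finite fields\<close>

lemma of_nat_card_eq_0:
  "of_nat (card (UNIV :: 'a::{ring_1, finite} set)) = (0::'a)"
proof -
  have "(\<Sum>x\<in>(UNIV::'a set). x + 1) = (\<Sum>x\<in>UNIV. x)"
    by (rule sum.reindex_bij_witness[where j="\<lambda>x. x + 1" and i="\<lambda>x. x - 1"]) auto
  then show ?thesis
    by (simp add: sum.distrib)
qed

lemma CHAR_eq_if_card_prime_power:
  assumes "card (UNIV :: 'a::{field, finite} set) = p ^ k" "prime p"
  shows "CHAR('a) = p"
proof -
  have "prime CHAR('a)"
    by (rule prime_CHAR_semidom) (simp add: finite_imp_CHAR_pos)
  moreover have "CHAR('a) dvd p ^ k"
    by (metis assms(1) of_nat_card_eq_0 of_nat_eq_0_iff_char_dvd)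
  ultimately show ?thesis
    using assms(2) by (metis prime_dvd_power primes_dvd_imp_eq)
qed

text \<open>The library states this for the class \<open>finite_field\<close>; a type of sort
  \<open>{field, finite}\<close> is not known to be an instance of it.\<close>
lemma finite_field_power_card_eq_same':
  fixes x :: "'a::{field, finite}"
  shows "x ^ card (UNIV :: 'a set) = x"
proof (cases "x = 0")
  case False
  let ?U = "UNIV - {0 :: 'a}"
  have "x ^ card ?U * (\<Prod>y\<in>?U. y) = (\<Prod>y\<in>?U. x * y)"
    by (simp add: prod.distrib)
  also have "\<dots> = (\<Prod>y\<in>?U. y)"
    by (rule prod.reindex_bij_witness[where j = "\<lambda>y. x * y" and i = "\<lambda>y. y / x"])
      (use False in auto)
  finally have "x ^ card ?U * (\<Prod>y\<in>?U. y) = 1 * (\<Prod>y\<in>?U. y)"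
    by simp
  then have "x ^ card ?U = 1"
    by (rule mult_right_cancel[THEN iffD1, rotated]) simp
  moreover have "card (UNIV :: 'a set) = Suc (card ?U)"
    using finite_UNIV_card_ge_0[where 'a = 'a] by (simp add: card_Diff_singleton)
  ultimately show ?thesis
    by (simp only: power_Suc mult_1_right)
qed (simp add: finite_UNIV_card_ge_0)

lemma finite_field_has_cube_root_of_unity:
  assumes "3 dvd card (UNIV :: 'a::{field, finite} set) - 1"
  shows "\<exists>w::'a. w^2 + w + 1 = 0"
proof (rule ccontr)
  assume no_root: "\<nexists>w::'a. w^2 + w + 1 = 0"
  define N where "N = card (UNIV :: 'a set) - 1"
  define m where "m = N div 3"
  have "card {0::'a, 1} \<le> card (UNIV :: 'a set)"
    by (rule card_mono) simp_all
  then have N: "N = 3 * m" "card (UNIV - {0::'a}) = N" "N > 0"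
    using assms unfolding N_def m_def by (auto simp: card_Diff_singleton)
  define p :: "'a poly" where "p = monom 1 m - 1"
  have "p \<noteq> 0"
  proof
    assume "p = 0"
    then have "coeff (monom (1::'a) m) m = coeff 1 m" by (simp add: p_def)
    then have "m = 0" by (auto split: if_splits)
    then show False
      using N by simp
  qed
  have roots: "UNIV - {0} \<subseteq> {x. poly p x = 0}"
  proof
    fix c :: 'a assume "c \<in> UNIV - {0}"
    define d where "d = c ^ m"
    have "c ^ (N + 1) = c"
      using finite_field_power_card_eq_same'[of c] finite_UNIV_card_ge_0[where 'a='a]
      by (simp add: N_def)
    then have "d ^ 3 = 1"
      using \<open>c \<in> UNIV - {0}\<close> by (simp add: d_def N flip: power_mult mult.commute)
    then have "(d - 1) * (d^2 + d + 1) = 0"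
      by (simp add: algebra_simps power2_eq_square power3_eq_cube)
    then have "d = 1"
      using no_root by auto
    then show "c \<in> {x. poly p x = 0}"
      by (simp add: p_def d_def poly_monom)
  qed
  have "N \<le> card {x. poly p x = 0}"
    unfolding N(2)[symmetric] by (rule card_mono[OF poly_roots_finite[OF \<open>p \<noteq> 0\<close>] roots])
  also have "\<dots> \<le> degree p"
    by (rule card_poly_roots_bound[OF \<open>p \<noteq> 0\<close>])
  also have "\<dots> \<le> m"
    unfolding p_def by (rule degree_diff_le) (simp_all add: degree_monom_eq)
  finally show False
    using N by linarith
qed

section \<open>The subfield with four elements\<close>

lemma CHAR_2_cube_root_of_unity:
  fixes w :: "'a::field"
  assumes "CHAR('a) = 2" "w^2 + w + 1 = 0"
  shows "w^2 = w + 1" "w^3 = 1" "w \<noteq> 0" "w \<noteq> 1"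
proof -
  show sq: "w^2 = w + 1"
    using assms(2) by (metis add.assoc add_eq_0_iff2 uminus_CHAR_2[OF assms(1)])
  show "w^3 = 1"
    using sq by (simp add: power3_eq_cube power2_eq_square algebra_simps CHAR_2_simps assms(1))
  show "w \<noteq> 0" "w \<noteq> 1"
    using assms by (auto simp: CHAR_2_simps)
qed

lemma Fq_4_eq:
  fixes w :: "'a::field"
  assumes "CHAR('a) = 2" "w^2 + w + 1 = 0"
  shows "Fq 4 = {0, 1, w, w + 1}"
proof (rule set_eqI)
  fix c :: 'a
  note w = CHAR_2_cube_root_of_unity[OF assms]
  have "c^4 - c = c * (c + 1) * (c^2 + c + 1)"
    by (simp add: algebra_simps power2_eq_square power4_eq_xxxx CHAR_2_simps assms(1))
  also have "c^2 + c + 1 = (c + w) * (c + (w + 1))"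
    using w(1) by (simp add: algebra_simps power2_eq_square CHAR_2_simps assms(1))
  finally have "c^4 - c = c * (c + 1) * (c + w) * (c + (w + 1))"
    by (simp only: mult.assoc)
  moreover have "x + y = 0 \<longleftrightarrow> x = y" for x y :: 'a
    using add_eq_0_iff2 uminus_CHAR_2[OF assms(1)] by metis
  ultimately show "c \<in> Fq 4 \<longleftrightarrow> c \<in> {0, 1, w, w + 1}"
    by (auto simp: Fq_def CHAR_2_simps assms(1))
qed

lemma power_sum_Fq_4:
  fixes w :: "'a::field"
  assumes "CHAR('a) = 2" "w^2 + w + 1 = 0"
  shows "(\<Sum>a\<in>Fq 4. a ^ k) = (if k \<noteq> 0 \<and> 3 dvd k then 1 else 0 :: 'a)"
proof -
  note w = CHAR_2_cube_root_of_unity[OF assms]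
  define t where "t = w ^ k"
  have "w + 1 \<noteq> 0" "w + 1 \<noteq> 1"
    using w by (auto simp: add_eq_0_iff2 uminus_CHAR_2[OF assms(1)])
  then have "(\<Sum>a\<in>Fq 4. a ^ k) = 0 ^ k + (1 + (w ^ k + (w + 1) ^ k))"
    using w by (simp add: Fq_4_eq[OF assms])
  also have "(w + 1) ^ k = t^2"
    by (simp add: t_def w(1)[symmetric] power_mult[symmetric] mult.commute)
  finally have sum_eq: "(\<Sum>a\<in>Fq 4. a ^ k) = 0 ^ k + (1 + t + t^2)"
    by (simp add: t_def add.assoc)
  have t_eq_1_iff: "t = 1 \<longleftrightarrow> 3 dvd k"
  proof -
    have "t = (w ^ 3) ^ (k div 3) * w ^ (k mod 3)"
      unfolding t_def power_mult[symmetric] power_add[symmetric] by simp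
    then have t: "t = w ^ (k mod 3)"
      by (simp add: w(2))
    have "k mod 3 = 0 \<or> k mod 3 = 1 \<or> k mod 3 = 2"
      by arith
    then show ?thesis
      using t w \<open>w + 1 \<noteq> 1\<close> by (auto simp: dvd_eq_mod_eq_0)
  qed
  have t_ne_1: "1 + t + t^2 = 0" if "t \<noteq> 1"
  proof -
    have "t^3 = 1"
      using w(2) by (simp add: t_def power_mult[symmetric] mult.commute[of k 3] power_mult)
    then have "(t - 1) * (1 + t + t^2) = 0"
      by (simp add: algebra_simps power2_eq_square power3_eq_cube)
    then show ?thesis
      using that by simp
  qed
  show ?thesis
  proof (cases "3 dvd k")
    case True
    then show ?thesis
      using t_eq_1_iff by (subst sum_eq) (cases k, simp_all add: CHAR_2_simps assms(1))
  next
    case False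
    then show ?thesis
      using t_eq_1_iff t_ne_1 by (subst sum_eq) (cases k, simp_all)
  qed
qed

lemma sum_Fq_4_prod_shifts:
  fixes w :: "'a::field" and P1 P2 P3 P4 :: "'a poly"
  assumes "CHAR('a) = 2" "w^2 + w + 1 = 0"
  shows "(\<Sum>a\<in>Fq 4. (P1 + [:a:]) * (P2 + [:a:]^2) * (P3 + [:a:]) * (P4 + [:a:]))
           = P2 + P1 * P3 + P1 * P4 + P3 * P4"
proof -
  txt \<open>Expanded in powers of \<open>a\<close>, only the coefficient of \<open>a\<^sup>3\<close> survives the summation.\<close>
  define e where "e = nth [P1 * P2 * P3 * P4, P2 * P3 * P4 + P1 * P2 * P4 + P1 * P2 * P3,
    P1 * P3 * P4 + P1 * P2 + P2 * P3 + P2 * P4, P2 + P1 * P3 + P1 * P4 + P3 * P4, P1 + P3 + P4, 1]"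
  have expand: "(P1 + A) * (P2 + A^2) * (P3 + A) * (P4 + A) = (\<Sum>k<6. e k * A ^ k)" for A
    by (simp add: e_def eval_nat_numeral algebra_simps)
  have "(\<Sum>a\<in>Fq 4. (P1 + [:a:]) * (P2 + [:a:]^2) * (P3 + [:a:]) * (P4 + [:a:]))
      = (\<Sum>k<6. \<Sum>a\<in>Fq 4. e k * [:a ^ k:])"
    unfolding expand by (subst sum.swap) (simp only: poly_const_pow)
  also have "\<dots> = (\<Sum>k<6. e k * [:\<Sum>a\<in>Fq 4. a ^ k:])"
    by (simp add: smult_sum)
  also have "\<dots> = e 3"
    using power_sum_Fq_4[OF assms] by (simp add: lessThan_nat_numeral)
  finally show ?thesis
    by (simp add: e_def)
qed

lemma power_power_4_eq:
  fixes a :: "'a::monoid_mult"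
  assumes "a ^ 4 = a"
  shows "a ^ (4 ^ j) = a"
  by (induction j) (simp_all add: power_mult assms)

lemma add_power_65921_CHAR_2:
  fixes x a :: "'a::comm_ring_1"
  assumes "CHAR('a) = 2" "a ^ 4 = a"
  shows "(x + a) ^ 65921 = (x + a) * (x ^ 128 + a ^ 2) * (x ^ 256 + a) * (x ^ 65536 + a)"
proof -
  have "a ^ (2 ^ 7) = a ^ 2"
    using power_power_4_eq[OF assms(2), of 3] power_mult[of a 64 2] by simp
  moreover have "a ^ (2 ^ 8) = a" "a ^ (2 ^ 16) = a"
    using power_power_4_eq[OF assms(2), of 4] power_power_4_eq[OF assms(2), of 8] by simp_all
  moreover have "(x + a) ^ 65921
      = (x + a) * (x + a) ^ (2 ^ 7) * (x + a) ^ (2 ^ 8) * (x + a) ^ (2 ^ 16)"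
    by (simp flip: power_add power_Suc)
  ultimately show ?thesis
    unfolding add_power_CHAR_2[OF assms(1)] by simp
qed

lemma sum_Fq_4_power_65921:
  fixes w :: "'a::field"
  assumes "CHAR('a) = 2" "w^2 + w + 1 = 0"
  defines "X \<equiv> [:0, 1:] :: 'a poly"
  shows "(\<Sum>a\<in>Fq 4. [:a, 1:] ^ 65921)
           = X ^ 128 + X * X ^ 256 + X * X ^ 65536 + X ^ 256 * X ^ 65536"
proof -
  have "[:a, 1:] ^ 65921
      = (X + [:a:]) * (X ^ 128 + [:a:] ^ 2) * (X ^ 256 + [:a:]) * (X ^ 65536 + [:a:])"
    if "a \<in> Fq 4" for a
  proof -
    have "[:a:] ^ 4 = [:a:]"
      using that by (simp add: Fq_def poly_const_pow)
    moreover have "[:a, 1:] = X + [:a:]"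
      by (simp add: X_def)
    ultimately show ?thesis
      using add_power_65921_CHAR_2[where x = X] assms(1) by simp
  qed
  then show ?thesis
    by (simp add: sum_Fq_4_prod_shifts[OF assms(1,2)])
qed

section \<open>The polynomial \<open>g\<^sub>6\<^sub>5\<^sub>9\<^sub>2\<^sub>1\<^sub>,\<^sub>4\<close>\<close>

lemma monom_1_eq_X_power: "monom 1 n = ([:0, 1:] :: 'a::comm_semiring_1 poly) ^ n"
  by (simp add: monom_altdef)

lemma pcompose_monom_1: "pcompose (monom 1 n) r = r ^ n"
  by (simp add: pcompose_altdef map_poly_monom poly_monom)

lemma pcompose_Spoly:
  fixes q :: nat
  assumes "prime CHAR('a::field)" "q = CHAR('a) ^ j"
  shows "pcompose (Spoly q m) (monom 1 q - [:0, 1:]) = (monom 1 (q ^ m) - [:0, 1:] :: 'a poly)"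
proof -
  let ?X = "[:0, 1:] :: 'a poly"
  have step: "(monom 1 q - ?X) ^ (q ^ i) = ?X ^ (q ^ Suc i) - ?X ^ (q ^ i)" for i
  proof -
    have "q ^ i = CHAR('a poly) ^ (j * i)"
      using assms(2) by (simp add: power_mult)
    then show ?thesis
      using assms(1) by (simp add: power_diff_CHAR monom_1_eq_X_power mult.commute
        power_mult[symmetric])
  qed
  have "pcompose (Spoly q m) (monom 1 q - ?X) = (\<Sum>i<m. ?X ^ (q ^ Suc i) - ?X ^ (q ^ i))"
    by (simp add: Spoly_def pcompose_sum pcompose_monom_1 step)
  also have "\<dots> = ?X ^ (q ^ m) - ?X"
    using sum_lessThan_telescope[of "\<lambda>i. ?X ^ (q ^ i)" m] by simp
  finally show ?thesis
    by (simp add: monom_1_eq_X_power)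
qed

lemma degree_monom_1_minus_X_pos:
  assumes "q \<noteq> 1"
  shows "degree (monom 1 q - [:0, 1:] :: 'a::field poly) > 0"
proof (cases "q = 0")
  case False
  then have "coeff (monom 1 q - [:0, 1:] :: 'a poly) q \<noteq> 0"
    using assms by (simp add: coeff_pCons split: nat.split)
  then show ?thesis
    using False le_degree[of _ q] by fastforce
next
  case True
  have "1 - [:0, 1:] = [:1, -1 :: 'a:]"
    by (simp add: one_pCons)
  then show ?thesis
    using True by simp
qed

lemma gpoly_eqI:
  assumes "q \<noteq> 1" "(\<Sum>a\<in>Fq q. [:a, 1:] ^ n) = pcompose g (monom 1 q - [:0, 1:])"
  shows "gpoly n q = (g :: 'a::field poly)"
  unfolding gpoly_def
proof (rule the_equality)
  fix h :: "'a poly"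
  assume "(\<Sum>a\<in>Fq q. [:a, 1:] ^ n) = pcompose h (monom 1 q - [:0, 1:])"
  then have "pcompose (h - g) (monom 1 q - [:0, 1:]) = 0"
    using assms(2) by (simp add: pcompose_diff)
  then have "h - g = 0"
    by (rule pcompose_eq_0[OF _ degree_monom_1_minus_X_pos[OF assms(1)]])
  then show "h = g"
    by simp
qed (rule assms(2))

lemma gpoly_65921_4:
  fixes w :: "'a::field"
  assumes "CHAR('a) = 2" "w^2 + w + 1 = 0"
  shows "gpoly 65921 4 = (Spoly 4 3 ^ 2 + Spoly 4 4 * Spoly 4 8 :: 'a poly)"
proof (rule gpoly_eqI)
  let ?X = "[:0, 1:] :: 'a poly"
  have S: "pcompose (Spoly 4 m) (monom 1 4 - ?X) = ?X ^ (4 ^ m) - ?X" for m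
    using pcompose_Spoly[where 'a='a, of 4 2 m] assms(1) by (simp add: monom_1_eq_X_power)
  have char_2_identity: "(y - p) ^ 2 + (u - p) * (v - p) = y ^ 2 + p * u + p * v + u * v"
    for y p u v :: "'a poly"
    using assms(1) by (simp add: algebra_simps power2_eq_square CHAR_2_simps)
  have "pcompose (Spoly 4 3 ^ 2 + Spoly 4 4 * Spoly 4 8) (monom 1 4 - ?X)
      = (?X ^ 64 - ?X) ^ 2 + (?X ^ 256 - ?X) * (?X ^ 65536 - ?X)"
    by (simp add: pcompose_add pcompose_mult power2_eq_square S)
  also have "\<dots> = ?X ^ 128 + ?X * ?X ^ 256 + ?X * ?X ^ 65536 + ?X ^ 256 * ?X ^ 65536"
    by (simp add: char_2_identity flip: power_mult)
  also have "\<dots> = (\<Sum>a\<in>Fq 4. [:a, 1:] ^ 65921)"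
    by (rule sum_Fq_4_power_65921[OF assms, symmetric])
  finally show "(\<Sum>a\<in>Fq 4. [:a, 1:] ^ 65921)
      = pcompose (Spoly 4 3 ^ 2 + Spoly 4 4 * Spoly 4 8) (monom 1 4 - ?X)"
    by simp
qed simp

lemma dvd_S4_S8_minus_S4_power_17:
  assumes "CHAR('a::field) = 2"
  shows "(monom 1 (4 ^ 6) - [:0, 1:]) dvd
           (Spoly 4 3 ^ 2 + Spoly 4 4 * Spoly 4 8
              - (Spoly 4 3 ^ 2 + Spoly 4 4 ^ (4 ^ 2 + 1)) :: 'a poly)"
proof -
  let ?X = "[:0, 1:] :: 'a poly"
  define M where "M = ?X ^ 4096 - ?X"
  have S4: "Spoly 4 4 = ?X + ?X ^ 4 + ?X ^ 16 + ?X ^ 64"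
    by (simp add: Spoly_def monom_1_eq_X_power lessThan_nat_numeral)
  have S8: "Spoly 4 8
      = ?X + ?X ^ 4 + ?X ^ 16 + ?X ^ 64 + ?X ^ 256 + ?X ^ 1024 + ?X ^ 4096 + ?X ^ 16384"
    by (simp add: Spoly_def monom_1_eq_X_power lessThan_nat_numeral add_ac)
  have S4_16: "Spoly 4 4 ^ 16 = ?X ^ 16 + ?X ^ 64 + ?X ^ 256 + ?X ^ 1024"
    using add_power_CHAR_2[where 'a="'a poly", of _ _ 4] assms
    by (simp add: S4 flip: power_mult)
  have M4: "M ^ 4 = ?X ^ 16384 - ?X ^ 4"
    using power_diff_CHAR[where 'a="'a poly" and m = 4 and n = 2] assms
    by (simp add: M_def flip: power_mult)
  have "Spoly 4 8 - Spoly 4 4 ^ 16 = M + M ^ 4"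
    unfolding M4 using assms by (simp add: S8 S4_16 M_def algebra_simps CHAR_2_simps)
  then have "Spoly 4 3 ^ 2 + Spoly 4 4 * Spoly 4 8 - (Spoly 4 3 ^ 2 + Spoly 4 4 ^ (4 ^ 2 + 1))
      = M * (Spoly 4 4 * (1 + M ^ 3))"
    by (simp add: algebra_simps power_add power3_eq_cube power4_eq_xxxx flip: power_Suc)
  then show ?thesis
    by (simp add: M_def monom_1_eq_X_power)
qed

section \<open>The permutation property\<close>

lemma poly_eq_if_X_power_minus_X_dvd:
  fixes f g :: "'a::comm_ring_1 poly"
  assumes "(monom 1 Q - [:0, 1:]) dvd (f - g)" "c ^ Q = c"
  shows "poly f c = poly g c"
proof -
  obtain r where "f - g = (monom 1 Q - [:0, 1:]) * r"
    using assms(1) by (elim dvdE)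
  then have "poly (f - g) c = 0"
    using assms(2) by (simp add: poly_monom)
  then show ?thesis
    by simp
qed

lemma poly_Spoly: "poly (Spoly q m) c = (\<Sum>i<m. c ^ (q ^ i))"
  by (simp add: Spoly_def poly_sum poly_monom)

lemma S3_S4_Frobenius_identity:
  fixes c :: "'a::field"
  assumes "CHAR('a) = 2" "\<And>x::'a. x ^ 4096 = x"
  defines "B \<equiv> c + c ^ 4 + c ^ 16" and "A \<equiv> c + c ^ 4 + c ^ 16 + c ^ 64"
  shows "(B ^ 2 + A ^ 17) ^ 16 + (B ^ 2 + A ^ 17) ^ 256 = A ^ 8"
proof -
  have frob: "(x + y) ^ 2 = x ^ 2 + y ^ 2" "(x + y) ^ 4 = x ^ 4 + y ^ 4"
    "(x + y) ^ 16 = x ^ 16 + y ^ 16" "(x + y) ^ 256 = x ^ 256 + y ^ 256" for x y :: 'a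
    using add_power_CHAR_2[OF assms(1), of x y 1] add_power_CHAR_2[OF assms(1), of x y 2]
      add_power_CHAR_2[OF assms(1), of x y 4] add_power_CHAR_2[OF assms(1), of x y 8]
    by simp_all
  have "c ^ 16384 = (c ^ 4096) ^ 4"
    by (simp flip: power_mult)
  then have "c ^ 16384 = c ^ 4"
    by (simp add: assms(2))
  then have B16: "B ^ 16 = c ^ 16 + c ^ 64 + c ^ 256"
    and B256: "B ^ 256 = c ^ 256 + c ^ 1024 + c"
    and A4: "A ^ 4 = c ^ 4 + c ^ 16 + c ^ 64 + c ^ 256"
    and A16: "A ^ 16 = c ^ 16 + c ^ 64 + c ^ 256 + c ^ 1024"
    and A256: "A ^ 256 = c ^ 256 + c ^ 1024 + c + c ^ 4"
    unfolding A_def B_def by (simp_all add: frob assms(2) flip: power_mult)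
  have "(B ^ 2) ^ 16 = (B ^ 16) ^ 2" "(A ^ 17) ^ 16 = A ^ 16 * A ^ 256"
    "(B ^ 2) ^ 256 = (B ^ 256) ^ 2" "(A ^ 17) ^ 256 = A ^ 256 * A ^ 4096"
    by (simp_all flip: power_mult power_add)
  then have "(B ^ 2 + A ^ 17) ^ 16 + (B ^ 2 + A ^ 17) ^ 256
      = (B ^ 16) ^ 2 + (B ^ 256) ^ 2 + A ^ 256 * (A ^ 16 + A)"
    by (simp only: frob assms(2) algebra_simps)
  also have "A ^ 16 + A = A ^ 256"
    unfolding A16 A256 using assms(1) by (simp add: A_def algebra_simps CHAR_2_simps)
  also have "(B ^ 16) ^ 2 + (B ^ 256) ^ 2 + A ^ 256 * A ^ 256 = (B ^ 16 + B ^ 256 + A ^ 256) ^ 2"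
    by (simp only: frob(1) power2_eq_square[of "A ^ 256"])
  also have "B ^ 16 + B ^ 256 + A ^ 256 = A ^ 4"
    using assms(1) by (simp add: B16 B256 A256 A4 algebra_simps CHAR_2_simps)
  finally show ?thesis
    by (simp flip: power_mult)
qed

lemma inj_poly_S3_square_plus_S4_power_17:
  assumes "CHAR('a::field) = 2" "\<And>x::'a. x ^ 4096 = x"
  shows "inj (\<lambda>c::'a. poly (Spoly 4 3 ^ 2 + Spoly 4 4 ^ 17) c)"
proof (rule injI)
  fix c d :: 'a
  let ?B = "\<lambda>x::'a. x + x ^ 4 + x ^ 16"
  let ?A = "\<lambda>x::'a. x + x ^ 4 + x ^ 16 + x ^ 64"
  have poly_eq: "poly (Spoly 4 3 ^ 2 + Spoly 4 4 ^ 17) x = ?B x ^ 2 + ?A x ^ 17" for x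
    by (simp add: poly_Spoly lessThan_nat_numeral add_ac)
  have prime: "prime CHAR('a)"
    using assms(1) by simp
  assume "poly (Spoly 4 3 ^ 2 + Spoly 4 4 ^ 17) c = poly (Spoly 4 3 ^ 2 + Spoly 4 4 ^ 17) d"
  then have G: "?B c ^ 2 + ?A c ^ 17 = ?B d ^ 2 + ?A d ^ 17"
    by (simp only: poly_eq)
  then have "?A c ^ 8 = ?A d ^ 8"
    using S3_S4_Frobenius_identity[OF assms, of c] S3_S4_Frobenius_identity[OF assms, of d] by simp
  then have A: "?A c = ?A d"
    using power_CHAR_power_inj[OF prime, of 8 3] assms(1) by simp
  then have "?B c ^ 2 = ?B d ^ 2"
    using G by simp
  then have "?B c = ?B d"
    using power_CHAR_power_inj[OF prime, of 2 1] assms(1) by simp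
  then have "c ^ 64 = d ^ 64"
    using A by simp
  then show "c = d"
    using power_CHAR_power_inj[OF prime, of 64 6] assms(1) by simp
qed

theorem mainTheorem5:
  assumes "card (UNIV :: 'a::{field, finite} set) = 4 ^ 6"
  shows "(monom 1 (4 ^ 6) - [:0, 1:]) dvd
           (gpoly 65921 4 - ((Spoly 4 3) ^ 2 + (Spoly 4 4) ^ (4 ^ 2 + 1)) :: 'a poly)
         \<and> bij (\<lambda>c::'a. poly (gpoly 65921 4) c)"
proof -
  have char: "CHAR('a) = 2"
    using CHAR_eq_if_card_prime_power[of 2 12] assms by simp
  have Frobenius: "x ^ 4096 = x" for x :: 'a
    using finite_field_power_card_eq_same'[of x] assms by simp
  have "3 dvd card (UNIV :: 'a set) - 1"
    using assms by simp
  then obtain w :: 'a where w: "w^2 + w + 1 = 0"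
    using finite_field_has_cube_root_of_unity by blast
  have dvd: "(monom 1 (4 ^ 6) - [:0, 1:]) dvd
      (gpoly 65921 4 - ((Spoly 4 3) ^ 2 + (Spoly 4 4) ^ (4 ^ 2 + 1)) :: 'a poly)"
    unfolding gpoly_65921_4[OF char w] by (rule dvd_S4_S8_minus_S4_power_17[OF char])
  have "poly (gpoly 65921 4) c = poly (Spoly 4 3 ^ 2 + Spoly 4 4 ^ 17) c" for c :: 'a
    using poly_eq_if_X_power_minus_X_dvd[OF dvd] Frobenius by simp
  then have "inj (\<lambda>c::'a. poly (gpoly 65921 4) c)"
    using inj_poly_S3_square_plus_S4_power_17[OF char Frobenius] by simp
  then show ?thesis
    using dvd by (simp add: finite_UNIV_inj_surj bij_def)
qed

end
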